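(* Let ${\cal G}$ be a locally finite graph and let $A_1,A_2,\dots$ be an increasing finite set exhaustion of ${\cal G}$. Then for any fixed $x,y\in{\cal G}$ and $t\ge0$, the sequence $K_{A_i}(x,y,t)$ is non-decreasing in $i$ and tends to a limit $K(x,y,t)$. This limit $K$ is independent of the choice of exhaustion, and $K\le G$ pointwise for every non-negative fundamental solution $G$ of the heat equation on ${\cal G}$.
   Context: A graph ${\cal G}$ consists of an undirected graph $(V,E)$ (multiple edges, self-loops allowed), edge lengths $\ell_e>0$, boundary vertices $\partial{\cal G}\subseteq V$, interior vertices $\mathring V=V\setminus\partial{\cal G}$, a vertex measure ${\cal V}$ (${\cal V}(v)>0$) and edge weights $a_e>0$; ${\cal G}$ is identified with its geometric realization. Locally finite: every vertex lies on finitely many edges. For edgewise linear $f$, $(\Delta f)(v)={\cal V}(v)^{-1}\sum_{e\sim\{u,v\}}a_e(f(v)-f(u))/\ell_e$. A function $u$ on ${\cal G}\times[0,\infty)$ satisfies the heat equation if it is continuous, edgewise linear in $x$, and $u_t=-\Delta u$ (both existing) at $x\in\mathring V$, $t>0$; it solves the Dirichlet initial value problem with initial value $f$ if also $u(x,0)=f(x)$ on $\mathring V$ and $u=0$ on $\partial{\cal G}$. Let $\delta_y$ be the edgewise linear function equal to $1/{\cal V}(y)$ at $y$ and $0$ at other vertices. A fundamental solution is a function $G(x,y,t)$ on ${\cal G}\times{\cal G}\times[0,\infty)$ such that for each $y\in\mathring V$, $(x,t)\mapsto G(x,y,t)$ solves the Dirichlet initial value problem with initial value $\delta_y$, $G(x,y,t)=0$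 for $y\in\partial{\cal G}$, and $G$ is edgewise linear in $x$ and in $y$. For finite $A\subseteq\mathring V$, let ${\cal G}_A$ be ${\cal G}$ with boundary $V\setminus A$; the space of edgewise linear functions vanishing outside $A$ is finite-dimensional, the operator $\Delta_A$ ($\Delta$ computed at vertices of $A$, zero elsewhere) is symmetric on it for the inner product $\int fg\,d{\cal V}$, and $K_A(x,y,t)=\sum_i e^{-t\lambda_i}\phi_i(x)\phi_i(y)$ for an orthonormal eigenbasis $\phi_i$ with $\Delta_A\phi_i=\lambda_i\phi_i$. An increasing finite set exhaustion is a sequence of finite sets $A_1\subseteq A_2\subseteq\cdots\subseteq\mathring V$ whose union is $\mathring V$. *)

theory Defs
  imports "HOL-Analysis.Analysis"
begin

text \<open>Edges are abstract elements of type 'e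
  (so multiple edges and self-loops are allowed); ends G e is the pair of endpoints
  (the order only fixes an orientation used to parametrize the edge).\<close>

record ('v, 'e) wgraph =
  verts :: "'v set"
  edges :: "'e set"
  ends  :: "'e \<Rightarrow> 'v \<times> 'v"
  len   :: "'e \<Rightarrow> real"
  bdry  :: "'v set"
  vmeas :: "'v \<Rightarrow> real"
  wt    :: "'e \<Rightarrow> real"

definition valid_graph :: "('v, 'e) wgraph \<Rightarrow> bool" where
  "valid_graph G \<longleftrightarrow> bdry G \<subseteq> verts G \<and>
     (\<forall>e\<in>edges G. fst (ends G e) \<in> verts G \<and> snd (ends G e) \<in> verts G
                  \<and> len G e > 0 \<and> wt G e > 0) \<and>
     (\<forall>v\<in>verts G. vmeas G v > 0)"

definition interior :: "('v, 'e) wgraph \<Rightarrow> 'v set" where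
  "interior G = verts G - bdry G"

definition incident :: "('v, 'e) wgraph \<Rightarrow> 'v \<Rightarrow> 'e set" where
  "incident G v = {e \<in> edges G. fst (ends G e) = v \<or> snd (ends G e) = v}"

definition locally_finite :: "('v, 'e) wgraph \<Rightarrow> bool" where
  "locally_finite G \<longleftrightarrow> (\<forall>v\<in>verts G. finite (incident G v))"

definition other_end :: "('v, 'e) wgraph \<Rightarrow> 'e \<Rightarrow> 'v \<Rightarrow> 'v" where
  "other_end G e v = (if fst (ends G e) = v then snd (ends G e) else fst (ends G e))"

definition lap :: "('v, 'e) wgraph \<Rightarrow> ('v \<Rightarrow> real) \<Rightarrow> 'v \<Rightarrow> real" where
  "lap G f v = (1 / vmeas G v) *
     (\<Sum>e\<in>incident G v. wt G e * (f v - f (other_end G e v)) / len G e)"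

text \<open>Points of the geometric realization: vertices, and interior points of edges,
  Ep e s being at distance s (0 < s < len e) from the first endpoint of e.\<close>
datatype ('v, 'e) gpt = Vx 'v | Ep 'e real

definition pts :: "('v, 'e) wgraph \<Rightarrow> ('v, 'e) gpt set" where
  "pts G = {Vx v | v. v \<in> verts G} \<union> {Ep e s | e s. e \<in> edges G \<and> 0 < s \<and> s < len G e}"

definition epoint :: "('v, 'e) wgraph \<Rightarrow> 'e \<Rightarrow> real \<Rightarrow> ('v, 'e) gpt" where
  "epoint G e s = (if s = 0 then Vx (fst (ends G e))
                   else if s = len G e then Vx (snd (ends G e)) else Ep e s)"

definition lift :: "('v, 'e) wgraph \<Rightarrow> ('v \<Rightarrow> real) \<Rightarrow> ('v, 'e) gpt \<Rightarrow> real" where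
  "lift G f p = (case p of Vx v \<Rightarrow> f v
     | Ep e s \<Rightarrow> (1 - s / len G e) * f (fst (ends G e)) + (s / len G e) * f (snd (ends G e)))"

definition edgewise_linear :: "('v, 'e) wgraph \<Rightarrow> (('v, 'e) gpt \<Rightarrow> real) \<Rightarrow> bool" where
  "edgewise_linear G f \<longleftrightarrow> (\<forall>p\<in>pts G. f p = lift G (\<lambda>v. f (Vx v)) p)"

text \<open>Continuity on the realization times [0,\<infinity>): continuity on each closed edge
  times [0,\<infinity>) (weak/CW topology), and at (isolated) vertices.\<close>
definition graph_continuous :: "('v, 'e) wgraph \<Rightarrow> (('v, 'e) gpt \<Rightarrow> real \<Rightarrow> real) \<Rightarrow> bool" where
  "graph_continuous G u \<longleftrightarrow>
     (\<forall>v\<in>verts G. continuous_on {0..} (\<lambda>t. u (Vx v) t)) \<and>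
     (\<forall>e\<in>edges G. continuous_on ({0..len G e} \<times> {0..}) (\<lambda>(s, t). u (epoint G e s) t))"

definition heat_solution :: "('v, 'e) wgraph \<Rightarrow> (('v, 'e) gpt \<Rightarrow> real \<Rightarrow> real) \<Rightarrow> bool" where
  "heat_solution G u \<longleftrightarrow> graph_continuous G u \<and>
     (\<forall>t\<ge>0. edgewise_linear G (\<lambda>x. u x t)) \<and>
     (\<forall>v\<in>interior G. \<forall>t>0.
        ((\<lambda>\<tau>. u (Vx v) \<tau>) has_real_derivative (- lap G (\<lambda>w. u (Vx w) t) v)) (at t))"

definition dirichlet_ivp ::
  "('v, 'e) wgraph \<Rightarrow> (('v, 'e) gpt \<Rightarrow> real \<Rightarrow> real) \<Rightarrow> (('v, 'e) gpt \<Rightarrow> real) \<Rightarrow> bool" where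
  "dirichlet_ivp G u f \<longleftrightarrow> heat_solution G u \<and>
     (\<forall>v\<in>interior G. u (Vx v) 0 = f (Vx v)) \<and>
     (\<forall>v\<in>bdry G. \<forall>t\<ge>0. u (Vx v) t = 0)"

definition delta :: "('v, 'e) wgraph \<Rightarrow> 'v \<Rightarrow> ('v, 'e) gpt \<Rightarrow> real" where
  "delta G y = lift G (\<lambda>v. if v = y then 1 / vmeas G y else 0)"

definition fundamental_solution ::
  "('v, 'e) wgraph \<Rightarrow> (('v, 'e) gpt \<Rightarrow> ('v, 'e) gpt \<Rightarrow> real \<Rightarrow> real) \<Rightarrow> bool" where
  "fundamental_solution G K \<longleftrightarrow>
     (\<forall>y\<in>interior G. dirichlet_ivp G (\<lambda>x t. K x (Vx y) t) (delta G y)) \<and>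
     (\<forall>y\<in>bdry G. \<forall>x\<in>pts G. \<forall>t\<ge>0. K x (Vx y) t = 0) \<and>
     (\<forall>y\<in>pts G. \<forall>t\<ge>0. edgewise_linear G (\<lambda>x. K x y t)) \<and>
     (\<forall>x\<in>pts G. \<forall>t\<ge>0. edgewise_linear G (\<lambda>y. K x y t))"

text \<open>Orthonormal eigenbasis (indexed by i < card A) of Delta_A on the edgewise linear
  functions vanishing outside A (represented by their vertex values), w.r.t.
  the inner product sum over v of vmeas v * f v * g v.\<close>
definition is_eigenbasis ::
  "('v, 'e) wgraph \<Rightarrow> 'v set \<Rightarrow> (nat \<Rightarrow> 'v \<Rightarrow> real) \<Rightarrow> (nat \<Rightarrow> real) \<Rightarrow> bool" where
  "is_eigenbasis G A \<phi> lam \<longleftrightarrow>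
     (\<forall>i<card A. \<forall>v. v \<notin> A \<longrightarrow> \<phi> i v = 0) \<and>
     (\<forall>i<card A. \<forall>j<card A. (\<Sum>v\<in>A. vmeas G v * \<phi> i v * \<phi> j v) = (if i = j then 1 else 0)) \<and>
     (\<forall>i<card A. \<forall>v\<in>A. lap G (\<phi> i) v = lam i * \<phi> i v)"

definition heat_kernel ::
  "('v, 'e) wgraph \<Rightarrow> 'v set \<Rightarrow> ('v, 'e) gpt \<Rightarrow> ('v, 'e) gpt \<Rightarrow> real \<Rightarrow> real" where
  "heat_kernel G A x y t =
     (let (\<phi>, lam) = (SOME (\<phi>, lam). is_eigenbasis G A \<phi> lam)
      in \<Sum>i<card A. exp (- t * lam i) * lift G (\<phi> i) x * lift G (\<phi> i) y)"

definition exhaustion :: "('v, 'e) wgraph \<Rightarrow> (nat \<Rightarrow> 'v set) \<Rightarrow> bool" where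
  "exhaustion G A \<longleftrightarrow> (\<forall>i. finite (A i) \<and> A i \<subseteq> interior G) \<and>
     (\<forall>i. A i \<subseteq> A (Suc i)) \<and> (\<Union>i. A i) = interior G"

end

theory Submission
  imports Defs
begin

text \<open>
  By Green's formula \<open>\<Delta>\<^sub>A\<close> is symmetric, so it has an orthonormal eigenbasis: maximising the
  Rayleigh quotient on the orthogonal complement of the eigenvectors found so far produces the
  next one, and Bessel's inequality together with the trace identity shows that \<open>card A\<close> of them
  are complete. Hence the vertex values of \<open>K\<^sub>A\<close> solve the heat equation on \<open>A\<close>, vanish
  off \<open>A\<close> and start at \<open>\<delta>\<^sub>w\<close>. The parabolic minimum principle on the finite set \<open>A\<close>
  compares \<open>K\<^sub>A\<close> with every solution that is non-negative off \<open>A\<close> and starts above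
  \<open>\<delta>\<^sub>w\<close>: this yields \<open>0 \<le> K\<^sub>A \<le> 1 / vmeas w\<close>, \<open>K\<^sub>A \<le> K\<^sub>B\<close> for \<open>A \<subseteq> B\<close>, and
  \<open>K\<^sub>A \<le> G\<close> for every non-negative fundamental solution \<open>G\<close>; edgewise linearity carries
  these bounds from vertices to all points. So \<open>K\<^sub>A\<^sub>i\<close> increases to a finite limit, and as each
  member of one exhaustion lies inside a member of any other, all exhaustions give the same limit.
\<close>

lemma lift_Vx [simp]: "lift G f (Vx v) = f v"
  by (simp add: lift_def)

lemma lift_sum_scaled:
  "lift G (\<lambda>v. \<Sum>i\<in>I. c i * f i v) p = (\<Sum>i\<in>I. c i * lift G (f i) p)"
proof (cases p)
  case (Ep e s)
  define \<alpha> where "\<alpha> = s / len G e"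
  have "c i * ((1 - \<alpha>) * f i (fst (ends G e)) + \<alpha> * f i (snd (ends G e)))
      = (1 - \<alpha>) * (c i * f i (fst (ends G e))) + \<alpha> * (c i * f i (snd (ends G e)))" for i
    by (simp add: algebra_simps)
  then show ?thesis
    using Ep by (simp only: lift_def gpt.case \<alpha>_def[symmetric] sum_distrib_left sum.distrib)
qed simp

lemma lift_mono:
  assumes "valid_graph G" "p \<in> pts G" "\<And>v. v \<in> verts G \<Longrightarrow> f v \<le> g v"
  shows "lift G f p \<le> lift G g p"
proof -
  from assms(2) consider (vertex) v where "p = Vx v" "v \<in> verts G"
    | (edge) e s where "p = Ep e s" "e \<in> edges G" "0 < s" "s < len G e"
    unfolding pts_def by blast
  then show ?thesis
  proof cases
    case vertex
    then show ?thesis using assms(3) by simp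
  next
    case edge
    have "fst (ends G e) \<in> verts G" "snd (ends G e) \<in> verts G" "len G e > 0"
      using assms(1) edge(2) unfolding valid_graph_def by auto
    moreover have "0 \<le> 1 - s / len G e" "0 \<le> s / len G e"
      using edge \<open>len G e > 0\<close> by auto
    ultimately show ?thesis
      unfolding edge(1) lift_def gpt.case by (intro add_mono mult_left_mono assms(3))
  qed
qed

lemma lift_cong:
  assumes "valid_graph G" "p \<in> pts G" "\<And>v. v \<in> verts G \<Longrightarrow> f v = g v"
  shows "lift G f p = lift G g p"
  using lift_mono[OF assms(1,2), of f g] lift_mono[OF assms(1,2), of g f] assms(3)
  by fastforce

lemma lift_const: "lift G (\<lambda>_. c) p = c"
  by (cases p) (simp_all add: lift_def algebra_simps)

lemma lap_affine:
  "lap G (\<lambda>u. a * f u + b * h u + c) v = a * lap G f v + b * lap G h v"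
proof -
  have "wt G e * ((a * f v + b * h v + c) - (a * f (other_end G e v) + b * h (other_end G e v) + c)) / len G e
      = a * (wt G e * (f v - f (other_end G e v)) / len G e)
        + b * (wt G e * (h v - h (other_end G e v)) / len G e)" for e
    by (simp add: algebra_simps add_divide_distrib diff_divide_distrib)
  then show ?thesis
    unfolding lap_def by (simp add: sum.distrib sum_distrib_left algebra_simps)
qed

lemma lap_add_const: "lap G (\<lambda>u. f u + c) v = lap G f v"
  using lap_affine[of G 1 f 0 f c v] by simp

lemma lap_const: "lap G (\<lambda>u. c) v = 0"
  using lap_affine[of G 0 "\<lambda>_. 0" 0 "\<lambda>_. 0" c v] by simp

lemma lap_diff: "lap G (\<lambda>u. f u - h u) v = lap G f v - lap G h v"
  using lap_affine[of G 1 f "-1" h 0 v] by simp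

lemma lap_add_scaled: "lap G (\<lambda>u. a * f u + b * h u) v = a * lap G f v + b * lap G h v"
  using lap_affine[of G a f b h 0 v] by simp

lemma lap_sum_scaled:
  "lap G (\<lambda>u. \<Sum>i\<in>I. c i * f i u) v = (\<Sum>i\<in>I. c i * lap G (f i) v)"
proof -
  have "wt G e * ((\<Sum>i\<in>I. c i * f i v) - (\<Sum>i\<in>I. c i * f i (other_end G e v))) / len G e
      = (\<Sum>i\<in>I. c i * (wt G e * (f i v - f i (other_end G e v)) / len G e))" for e
    by (simp add: sum_distrib_left sum_divide_distrib algebra_simps flip: sum_subtractf)
  then show ?thesis
    unfolding lap_def by (simp add: sum_distrib_left algebra_simps sum.swap[of _ "incident G v"])
qed

lemma lap_nonpos_at_minimum:
  assumes valid: "valid_graph G" and "w \<in> verts G"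
    and min: "\<And>u. u \<in> verts G \<Longrightarrow> f w \<le> f u"
  shows "lap G f w \<le> 0"
proof -
  have "wt G e * (f w - f (other_end G e w)) / len G e \<le> 0" if "e \<in> incident G w" for e
  proof -
    have "e \<in> edges G" using that by (simp add: incident_def)
    then have "other_end G e w \<in> verts G" "wt G e > 0" "len G e > 0"
      using valid unfolding valid_graph_def other_end_def by auto
    then show ?thesis using min by (intro divide_nonpos_pos mult_nonneg_nonpos) auto
  qed
  moreover have "vmeas G w > 0" using valid \<open>w \<in> verts G\<close> unfolding valid_graph_def by auto
  ultimately show ?thesis
    unfolding lap_def by (intro mult_nonneg_nonpos sum_nonpos) auto
qed

section \<open>A parabolic minimum principle\<close>

locale finite_region =
  fixes G :: "('v, 'e) wgraph" and A :: "'v set"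
  assumes valid: "valid_graph G" and finite_A: "finite A" and A_verts: "A \<subseteq> verts G"
begin

lemma vmeas_pos: "v \<in> verts G \<Longrightarrow> vmeas G v > 0"
  using valid unfolding valid_graph_def by auto

lemma first_nonpositive_time:
  fixes y :: "'v \<Rightarrow> real \<Rightarrow> real"
  assumes cont: "\<And>u. u \<in> A \<Longrightarrow> continuous_on {0..} (y u)"
    and init: "\<And>u. u \<in> A \<Longrightarrow> y u 0 > 0"
    and "v \<in> A" and "t \<ge> 0" and "y v t \<le> 0"
  obtains t0 u0 where "0 < t0" "t0 \<le> t" "u0 \<in> A" "y u0 t0 \<le> 0"
    "\<And>u s. u \<in> A \<Longrightarrow> 0 \<le> s \<Longrightarrow> s < t0 \<Longrightarrow> y u s > 0"
proof -
  define S where "S = {s \<in> {0..t}. \<exists>u\<in>A. y u s \<le> 0}"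
  have "t \<in> S" unfolding S_def using assms(3-5) by auto
  have bdd: "bdd_below S" unfolding S_def by (rule bdd_belowI[of _ 0]) auto
  have "closed {s \<in> {0..t}. y u s \<le> 0}" if "u \<in> A" for u
    using continuous_on_subset[OF cont[OF that], of "{0..t}"]
    by (intro continuous_on_closed_Collect_le) (auto intro: continuous_intros)
  moreover have "S = (\<Union>u\<in>A. {s \<in> {0..t}. y u s \<le> 0})" unfolding S_def by auto
  ultimately have "closed S" using finite_A by auto
  define t0 where "t0 = Inf S"
  have "t0 \<in> S" unfolding t0_def using closed_contains_Inf[OF _ bdd \<open>closed S\<close>] \<open>t \<in> S\<close> by auto
  then obtain u0 where u0: "u0 \<in> A" "y u0 t0 \<le> 0" and "0 \<le> t0" "t0 \<le> t"
    unfolding S_def by auto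
  moreover have "t0 > 0" using init[OF u0(1)] u0(2) \<open>0 \<le> t0\<close> by (cases "t0 = 0") auto
  moreover have "y u s > 0" if "u \<in> A" "0 \<le> s" "s < t0" for u s
  proof (rule ccontr)
    assume "\<not> y u s > 0"
    then have "s \<in> S" unfolding S_def using that \<open>t0 \<le> t\<close> by (auto intro!: bexI[of _ u])
    then have "t0 \<le> s" unfolding t0_def using bdd by (rule cInf_lower)
    then show False using \<open>s < t0\<close> by simp
  qed
  ultimately show ?thesis using that by blast
qed

text \<open>At the first time \<open>t0\<close> where \<open>y\<close> fails to be positive on \<open>A\<close>, a minimiser \<open>w\<close> of
  \<open>\<lambda>u. y u t0\<close> over \<open>A\<close> is a minimiser over all vertices, so the Laplacian is non-positive
  at \<open>w\<close> and \<open>y w\<close> is strictly increasing at \<open>t0\<close>: it was non-positive slightly earlier.\<close>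
lemma strict_supersolution_pos:
  fixes y y' :: "'v \<Rightarrow> real \<Rightarrow> real"
  assumes cont: "\<And>u. u \<in> A \<Longrightarrow> continuous_on {0..} (y u)"
    and deriv: "\<And>u s. u \<in> A \<Longrightarrow> s > 0 \<Longrightarrow> (y u has_real_derivative y' u s) (at s)"
    and super: "\<And>u s. u \<in> A \<Longrightarrow> s > 0 \<Longrightarrow> y' u s > - lap G (\<lambda>v. y v s) u"
    and init: "\<And>u. u \<in> A \<Longrightarrow> y u 0 > 0"
    and outside: "\<And>u s. u \<in> verts G \<Longrightarrow> u \<notin> A \<Longrightarrow> s \<ge> 0 \<Longrightarrow> y u s > 0"
    and "v \<in> A" and "t \<ge> 0"
  shows "y v t > 0"
proof (rule ccontr)
  assume "\<not> y v t > 0"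
  then have "y v t \<le> 0" by simp
  obtain t0 u0 where "0 < t0" "t0 \<le> t" "u0 \<in> A" "y u0 t0 \<le> 0"
    and before: "\<And>u s. u \<in> A \<Longrightarrow> 0 \<le> s \<Longrightarrow> s < t0 \<Longrightarrow> y u s > 0"
    using first_nonpositive_time[where y = y, OF cont init \<open>v \<in> A\<close> \<open>t \<ge> 0\<close> \<open>y v t \<le> 0\<close>]
    by blast
  obtain w where w: "w \<in> A" and wmin: "\<And>u. u \<in> A \<Longrightarrow> y w t0 \<le> y u t0"
    using ex_is_arg_min_if_finite[OF finite_A, of "\<lambda>u. y u t0"] \<open>u0 \<in> A\<close>
    by (auto simp: is_arg_min_linorder)
  have "y w t0 \<le> 0" using wmin[OF \<open>u0 \<in> A\<close>] \<open>y u0 t0 \<le> 0\<close> by simp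
  have "y w t0 \<le> y u t0" if "u \<in> verts G" for u
    using wmin outside[OF that _ less_imp_le[OF \<open>0 < t0\<close>]] \<open>y w t0 \<le> 0\<close>
    by (cases "u \<in> A") force+
  then have "lap G (\<lambda>u. y u t0) w \<le> 0"
    using w A_verts by (intro lap_nonpos_at_minimum[OF valid]) auto
  then have "y' w t0 > 0" using super[OF w \<open>t0 > 0\<close>] by simp
  from DERIV_pos_inc_left[OF deriv[OF w \<open>t0 > 0\<close>] this]
  obtain d where "d > 0" and inc: "\<And>h. h > 0 \<Longrightarrow> h < d \<Longrightarrow> y w (t0 - h) < y w t0"
    by blast
  define h where "h = min d t0 / 2"
  have "h > 0" "h < d" "h < t0" unfolding h_def using \<open>d > 0\<close> \<open>t0 > 0\<close> by auto
  then have "y w (t0 - h) < 0" using inc[of h] \<open>y w t0 \<le> 0\<close> by simp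
  moreover have "y w (t0 - h) > 0" using before[OF w] \<open>h > 0\<close> \<open>h < t0\<close> by simp
  ultimately show False by simp
qed

lemma heat_minimum_principle:
  assumes cont: "\<And>u. u \<in> A \<Longrightarrow> continuous_on {0..} (z u)"
    and deriv: "\<And>u s. u \<in> A \<Longrightarrow> s > 0 \<Longrightarrow> (z u has_real_derivative - lap G (\<lambda>v. z v s) u) (at s)"
    and init: "\<And>u. u \<in> A \<Longrightarrow> z u 0 \<ge> 0"
    and outside: "\<And>u s. u \<in> verts G \<Longrightarrow> u \<notin> A \<Longrightarrow> s \<ge> 0 \<Longrightarrow> z u s \<ge> 0"
    and v: "v \<in> A" and t: "t \<ge> 0"
  shows "z v t \<ge> 0"
proof (rule ccontr)
  assume "\<not> z v t \<ge> 0"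
  define \<epsilon> where "\<epsilon> = - z v t / (1 + t)"
  have "\<epsilon> > 0" unfolding \<epsilon>_def using \<open>\<not> z v t \<ge> 0\<close> t by (simp add: divide_neg_pos)
  define y where "y u s = z u s + \<epsilon> * (1 + s)" for u s
  have "y v t > 0"
  proof (rule strict_supersolution_pos[where y = y and y' = "\<lambda>u s. - lap G (\<lambda>v. z v s) u + \<epsilon>"])
    show "continuous_on {0..} (y u)" if "u \<in> A" for u
      unfolding y_def using cont[OF that] by (intro continuous_intros)
    show "(y u has_real_derivative - lap G (\<lambda>v. z v s) u + \<epsilon>) (at s)" if "u \<in> A" "s > 0" for u s
      unfolding y_def[abs_def]
      using deriv[OF that] by (auto intro!: derivative_eq_intros)
    show "- lap G (\<lambda>v. y v s) u < - lap G (\<lambda>v. z v s) u + \<epsilon>" for u s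
      unfolding y_def lap_add_const using \<open>\<epsilon> > 0\<close> by simp
  qed (use init outside \<open>\<epsilon> > 0\<close> v t in \<open>auto simp: y_def intro!: add_nonneg_pos\<close>)
  moreover have "y v t = 0" unfolding y_def \<epsilon>_def using t by (simp add: field_simps)
  ultimately show False by simp
qed

end

section \<open>Green's formula\<close>

definition inner_on :: "('v, 'e) wgraph \<Rightarrow> 'v set \<Rightarrow> ('v \<Rightarrow> real) \<Rightarrow> ('v \<Rightarrow> real) \<Rightarrow> real" where
  "inner_on G A f g = (\<Sum>v\<in>A. vmeas G v * f v * g v)"

definition supported_on :: "'v set \<Rightarrow> ('v \<Rightarrow> real) \<Rightarrow> bool" where
  "supported_on A f \<longleftrightarrow> (\<forall>v. v \<notin> A \<longrightarrow> f v = 0)"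

lemma inner_on_commute: "inner_on G A f g = inner_on G A g f"
  unfolding inner_on_def by (simp add: mult_ac)

lemma inner_on_cong:
  "(\<And>v. v \<in> A \<Longrightarrow> f v = f' v) \<Longrightarrow> (\<And>v. v \<in> A \<Longrightarrow> g v = g' v) \<Longrightarrow>
    inner_on G A f g = inner_on G A f' g'"
  unfolding inner_on_def by (rule sum.cong) auto

lemma inner_on_add_scaled_left:
  "inner_on G A (\<lambda>v. a * f v + b * h v) g = a * inner_on G A f g + b * inner_on G A h g"
  unfolding inner_on_def by (simp add: sum.distrib sum_distrib_left algebra_simps)

lemma inner_on_add_scaled_right:
  "inner_on G A g (\<lambda>v. a * f v + b * h v) = a * inner_on G A g f + b * inner_on G A g h"
  using inner_on_add_scaled_left[of G A a f b h g] by (simp add: inner_on_commute)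

lemma inner_on_scale_left: "inner_on G A (\<lambda>v. a * f v) g = a * inner_on G A f g"
  using inner_on_add_scaled_left[of G A a f 0 f g] by simp

lemma inner_on_scale_self:
  "inner_on G A (\<lambda>v. a * f v) (\<lambda>v. a * f v) = a * a * inner_on G A f f"
  unfolding inner_on_def by (simp add: sum_distrib_left mult_ac)

lemma inner_on_diff_right: "inner_on G A f (\<lambda>v. g v - h v) = inner_on G A f g - inner_on G A f h"
  using inner_on_add_scaled_right[of G A f 1 g "-1" h] by simp

lemma inner_on_sum_scaled_right:
  "inner_on G A f (\<lambda>v. \<Sum>j\<in>J. c j * g j v) = (\<Sum>j\<in>J. c j * inner_on G A f (g j))"
  unfolding inner_on_def by (simp add: sum_distrib_left sum.swap[of _ J] mult_ac)

lemma inner_on_indicator_right: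
  "finite A \<Longrightarrow> a \<in> A \<Longrightarrow> inner_on G A f (\<lambda>v. if a = v then 1 else 0) = vmeas G a * f a"
  unfolding inner_on_def by (simp add: if_distrib[of "\<lambda>x. _ * x"] cong: if_cong)

definition edge_energy :: "('v, 'e) wgraph \<Rightarrow> 'e \<Rightarrow> ('v \<Rightarrow> real) \<Rightarrow> ('v \<Rightarrow> real) \<Rightarrow> real" where
  "edge_energy G e f g = wt G e / len G e
     * (f (fst (ends G e)) - f (snd (ends G e))) * (g (fst (ends G e)) - g (snd (ends G e)))"

lemma edge_energy_commute: "edge_energy G e f g = edge_energy G e g f"
  by (simp add: edge_energy_def mult_ac)

text \<open>The left-hand side collects the terms of \<open>inner_on G A (lap G f) g\<close> that involve \<open>e\<close>.\<close>
lemma sum_edge_contributions: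
  assumes e: "e \<in> edges G" and "finite A" and g: "supported_on A g"
  shows "(\<Sum>v\<in>A. if e \<in> incident G v then g v * (wt G e * (f v - f (other_end G e v)) / len G e) else 0)
    = edge_energy G e g f"
proof -
  define a where "a = fst (ends G e)"
  define b where "b = snd (ends G e)"
  define h where
    "h v = (if e \<in> incident G v then g v * (wt G e * (f v - f (other_end G e v)) / len G e) else 0)"
    for v
  have incident: "e \<in> incident G v \<longleftrightarrow> v = a \<or> v = b" for v
    using e unfolding incident_def a_def b_def by auto
  have "(\<Sum>v\<in>A. h v) = (\<Sum>v\<in>A \<union> {a, b}. h v)"
    by (rule sum.mono_neutral_left) (use assms in \<open>auto simp: h_def supported_on_def\<close>)
  also have "\<dots> = (\<Sum>v\<in>{a, b}. h v)"
    by (rule sum.mono_neutral_right) (use assms in \<open>auto simp: h_def incident\<close>)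
  also have "\<dots> = edge_energy G e g f"
  proof (cases "a = b")
    case True
    then show ?thesis by (simp add: h_def incident other_end_def edge_energy_def a_def b_def)
  next
    case False
    then have "other_end G e a = b" "other_end G e b = a"
      unfolding other_end_def a_def b_def by auto
    with False show ?thesis
      by (simp add: h_def incident edge_energy_def algebra_simps diff_divide_distrib
          flip: a_def b_def)
  qed
  finally show ?thesis unfolding h_def .
qed

context finite_region
begin

lemma weighted_square_nonneg: "v \<in> A \<Longrightarrow> vmeas G v * f v * f v \<ge> 0"
  using vmeas_pos[of v] A_verts by (auto simp: mult.assoc zero_le_mult_iff)

lemma inner_on_self_nonneg: "inner_on G A f f \<ge> 0"
  unfolding inner_on_def by (intro sum_nonneg weighted_square_nonneg)

lemma inner_on_self_eq_0:
  assumes "inner_on G A f f = 0" and "v \<in> A"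
  shows "f v = 0"
proof -
  have "\<forall>u\<in>A. vmeas G u * f u * f u = 0"
    using assms(1) finite_A weighted_square_nonneg unfolding inner_on_def
    by (subst (asm) sum_nonneg_eq_0_iff) auto
  then show ?thesis using assms(2) vmeas_pos A_verts by force
qed

lemma inner_on_self_pos: "v \<in> A \<Longrightarrow> f v \<noteq> 0 \<Longrightarrow> inner_on G A f f > 0"
  using inner_on_self_nonneg[of f] inner_on_self_eq_0[of f v] by linarith

end

locale locally_finite_region = finite_region +
  assumes locally_finite: "locally_finite G"
begin

lemma green_formula:
  assumes g: "supported_on A g"
  shows "inner_on G A (lap G f) g = (\<Sum>e\<in>(\<Union>v\<in>A. incident G v). edge_energy G e g f)"
proof -
  define E where "E = (\<Union>v\<in>A. incident G v)"
  have "finite E"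
    unfolding E_def using finite_A A_verts locally_finite unfolding locally_finite_def by auto
  define F where "F v e = g v * (wt G e * (f v - f (other_end G e v)) / len G e)" for v e
  have "inner_on G A (lap G f) g = (\<Sum>v\<in>A. \<Sum>e\<in>incident G v. F v e)"
    unfolding inner_on_def
  proof (rule sum.cong[OF refl])
    fix v assume "v \<in> A"
    then have "vmeas G v \<noteq> 0" using vmeas_pos A_verts by force
    then show "vmeas G v * lap G f v * g v = (\<Sum>e\<in>incident G v. F v e)"
      unfolding lap_def F_def by (simp add: sum_distrib_left mult_ac)
  qed
  also have "\<dots> = (\<Sum>v\<in>A. \<Sum>e\<in>E. if e \<in> incident G v then F v e else 0)"
  proof (rule sum.cong[OF refl])
    fix v assume "v \<in> A"
    then have "E \<inter> incident G v = incident G v" unfolding E_def by auto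
    then show "(\<Sum>e\<in>incident G v. F v e) = (\<Sum>e\<in>E. if e \<in> incident G v then F v e else 0)"
      using sum.inter_restrict[OF \<open>finite E\<close>, of "F v" "incident G v"] by simp
  qed
  also have "\<dots> = (\<Sum>e\<in>E. \<Sum>v\<in>A. if e \<in> incident G v then F v e else 0)"
    by (rule sum.swap)
  also have "\<dots> = (\<Sum>e\<in>E. edge_energy G e g f)"
    unfolding F_def using finite_A g
    by (intro sum.cong refl sum_edge_contributions) (auto simp: E_def incident_def)
  finally show ?thesis unfolding E_def .
qed

lemma inner_lap_commute:
  "supported_on A f \<Longrightarrow> supported_on A g \<Longrightarrow>
    inner_on G A (lap G f) g = inner_on G A (lap G g) f"
  by (simp add: green_formula edge_energy_commute)

end

lemma locally_finite_region_subset: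
  "locally_finite_region G A \<Longrightarrow> B \<subseteq> A \<Longrightarrow> locally_finite_region G B"
  unfolding locally_finite_region_def locally_finite_region_axioms_def finite_region_def
  by (auto intro: finite_subset)

section \<open>Orthonormal families and Bessel's inequality\<close>

definition orthonormal_on :: "('v, 'e) wgraph \<Rightarrow> 'v set \<Rightarrow> nat \<Rightarrow> (nat \<Rightarrow> 'v \<Rightarrow> real) \<Rightarrow> bool" where
  "orthonormal_on G A k \<phi> \<longleftrightarrow> (\<forall>i<k. supported_on A (\<phi> i)) \<and>
     (\<forall>i<k. \<forall>j<k. inner_on G A (\<phi> i) (\<phi> j) = (if i = j then 1 else 0))"

definition complete_on :: "('v, 'e) wgraph \<Rightarrow> 'v set \<Rightarrow> nat \<Rightarrow> (nat \<Rightarrow> 'v \<Rightarrow> real) \<Rightarrow> bool" where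
  "complete_on G A k \<phi> \<longleftrightarrow>
     (\<forall>a\<in>A. \<forall>b\<in>A. vmeas G a * (\<Sum>j<k. \<phi> j a * \<phi> j b) = (if a = b then 1 else 0))"

text \<open>The component of the indicator function of \<open>a\<close> orthogonal to \<open>\<phi> 0, \<dots>, \<phi> (k - 1)\<close>,
  whose coefficients are \<open>inner_on G A (\<lambda>b. if a = b then 1 else 0) (\<phi> j) = vmeas G a * \<phi> j a\<close>.\<close>
definition residual :: "('v, 'e) wgraph \<Rightarrow> 'v set \<Rightarrow> nat \<Rightarrow> (nat \<Rightarrow> 'v \<Rightarrow> real) \<Rightarrow> 'v \<Rightarrow> 'v \<Rightarrow> real" where
  "residual G A k \<phi> a b =
     (if b \<in> A then (if a = b then 1 else 0) - vmeas G a * (\<Sum>j<k. \<phi> j a * \<phi> j b) else 0)"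

lemma orthonormal_trace:
  assumes "orthonormal_on G A k \<phi>"
  shows "real k = (\<Sum>a\<in>A. vmeas G a * (\<Sum>j<k. \<phi> j a * \<phi> j a))"
proof -
  have "real k = (\<Sum>j<k. inner_on G A (\<phi> j) (\<phi> j))"
    using assms unfolding orthonormal_on_def by simp
  also have "\<dots> = (\<Sum>a\<in>A. vmeas G a * (\<Sum>j<k. \<phi> j a * \<phi> j a))"
    unfolding inner_on_def by (simp add: sum_distrib_left sum.swap[of _ A] mult_ac)
  finally show ?thesis .
qed

lemma complete_on_card:
  assumes "orthonormal_on G A k \<phi>" and "complete_on G A k \<phi>"
  shows "k = card A"
proof -
  have "real k = (\<Sum>a\<in>A. 1)"
    unfolding orthonormal_trace[OF assms(1)] using assms(2) unfolding complete_on_def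
    by (intro sum.cong) auto
  then show ?thesis by simp
qed

context finite_region
begin

lemma residual_eq_on:
  "b \<in> A \<Longrightarrow> residual G A k \<phi> a b = (if a = b then 1 else 0) - (\<Sum>j<k. (vmeas G a * \<phi> j a) * \<phi> j b)"
  by (simp add: residual_def sum_distrib_left mult_ac)

lemma inner_residual_expand:
  assumes "a \<in> A"
  shows "inner_on G A f (residual G A k \<phi> a)
    = vmeas G a * f a - (\<Sum>j<k. (vmeas G a * \<phi> j a) * inner_on G A f (\<phi> j))"
proof -
  have "inner_on G A f (residual G A k \<phi> a)
      = inner_on G A f (\<lambda>b. (if a = b then 1 else 0) - (\<Sum>j<k. (vmeas G a * \<phi> j a) * \<phi> j b))"
    by (rule inner_on_cong) (simp_all add: residual_eq_on)
  then show ?thesis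
    by (simp add: inner_on_diff_right inner_on_sum_scaled_right inner_on_indicator_right
        finite_A assms)
qed

lemma inner_residual_orthonormal:
  assumes "orthonormal_on G A k \<phi>" and "a \<in> A" and "i < k"
  shows "inner_on G A (\<phi> i) (residual G A k \<phi> a) = 0"
proof -
  have "(\<Sum>j<k. (vmeas G a * \<phi> j a) * inner_on G A (\<phi> i) (\<phi> j))
      = (\<Sum>j<k. if j = i then vmeas G a * \<phi> j a else 0)"
    using assms(1,3) unfolding orthonormal_on_def by (intro sum.cong) auto
  also have "\<dots> = vmeas G a * \<phi> i a" using assms(3) by simp
  finally show ?thesis by (simp add: inner_residual_expand[OF assms(2)])
qed

lemma inner_residual_self:
  assumes "orthonormal_on G A k \<phi>" and "a \<in> A"
  shows "inner_on G A (residual G A k \<phi> a) (residual G A k \<phi> a)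
    = vmeas G a * (1 - vmeas G a * (\<Sum>j<k. \<phi> j a * \<phi> j a))"
proof -
  have "(\<Sum>j<k. (vmeas G a * \<phi> j a) * inner_on G A (residual G A k \<phi> a) (\<phi> j)) = 0"
    using inner_residual_orthonormal[OF assms] by (simp add: inner_on_commute)
  moreover have "residual G A k \<phi> a a = 1 - vmeas G a * (\<Sum>j<k. \<phi> j a * \<phi> j a)"
    using assms(2) by (simp add: residual_def)
  ultimately show ?thesis
    using assms(2) by (simp add: inner_residual_expand)
qed

lemma bessel_inequality:
  assumes "orthonormal_on G A k \<phi>" and "a \<in> A"
  shows "vmeas G a * (\<Sum>j<k. \<phi> j a * \<phi> j a) \<le> 1"
  using inner_on_self_nonneg[of "residual G A k \<phi> a"] vmeas_pos[of a] assms A_verts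
  by (force simp: inner_residual_self zero_le_mult_iff)

text \<open>With \<open>card A\<close> members, equality must hold in every Bessel inequality, so every residual
  vanishes.\<close>
lemma orthonormal_card_complete:
  assumes "orthonormal_on G A (card A) \<phi>"
  shows "complete_on G A (card A) \<phi>"
  unfolding complete_on_def
proof (intro ballI)
  fix a b assume "a \<in> A" "b \<in> A"
  let ?s = "\<lambda>a. vmeas G a * (\<Sum>j<card A. \<phi> j a * \<phi> j a)"
  have "(\<Sum>a\<in>A. 1 - ?s a) = 0"
    using orthonormal_trace[OF assms] by (simp add: sum_subtractf)
  then have "\<forall>a\<in>A. 1 - ?s a = 0"
    using finite_A bessel_inequality[OF assms] by (subst (asm) sum_nonneg_eq_0_iff) auto
  then have "inner_on G A (residual G A (card A) \<phi> a) (residual G A (card A) \<phi> a) = 0"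
    using inner_residual_self[OF assms \<open>a \<in> A\<close>] \<open>a \<in> A\<close> by simp
  from inner_on_self_eq_0[OF this \<open>b \<in> A\<close>]
  show "vmeas G a * (\<Sum>j<card A. \<phi> j a * \<phi> j b) = (if a = b then 1 else 0)"
    using \<open>b \<in> A\<close> by (simp add: residual_def)
qed

lemma exists_unit_orthogonal_if_incomplete:
  assumes "orthonormal_on G A k \<phi>" and "\<not> complete_on G A k \<phi>"
  obtains f where "supported_on A f" "inner_on G A f f = 1" "\<And>j. j < k \<Longrightarrow> inner_on G A f (\<phi> j) = 0"
proof -
  from assms(2) obtain a b where "a \<in> A" "b \<in> A" "residual G A k \<phi> a b \<noteq> 0"
    unfolding complete_on_def residual_def by auto
  define r where "r = residual G A k \<phi> a"
  define q where "q = inner_on G A r r"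
  have "q > 0"
    unfolding q_def r_def using \<open>b \<in> A\<close> \<open>residual G A k \<phi> a b \<noteq> 0\<close> by (rule inner_on_self_pos)
  define f where "f v = (1 / sqrt q) * r v" for v
  have "inner_on G A f f = (1 / sqrt q) * (1 / sqrt q) * q"
    unfolding f_def q_def by (rule inner_on_scale_self)
  also have "\<dots> = 1" using \<open>q > 0\<close> by (simp add: real_sqrt_mult[symmetric])
  finally have "inner_on G A f f = 1" .
  moreover have "inner_on G A f (\<phi> j) = 0" if "j < k" for j
    using inner_residual_orthonormal[OF assms(1) \<open>a \<in> A\<close> that]
    unfolding f_def inner_on_scale_left r_def by (simp add: inner_on_commute)
  moreover have "supported_on A f" unfolding f_def r_def supported_on_def residual_def by simp
  ultimately show ?thesis using that by blast
qed

end

section \<open>Existence of an orthonormal eigenbasis\<close>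

definition eigenfamily_on ::
  "('v, 'e) wgraph \<Rightarrow> 'v set \<Rightarrow> nat \<Rightarrow> (nat \<Rightarrow> 'v \<Rightarrow> real) \<Rightarrow> (nat \<Rightarrow> real) \<Rightarrow> bool" where
  "eigenfamily_on G A k \<phi> lam \<longleftrightarrow> orthonormal_on G A k \<phi> \<and>
     (\<forall>i<k. \<forall>v\<in>A. lap G (\<phi> i) v = lam i * \<phi> i v)"

definition orth_complement ::
  "('v, 'e) wgraph \<Rightarrow> 'v set \<Rightarrow> nat \<Rightarrow> (nat \<Rightarrow> 'v \<Rightarrow> real) \<Rightarrow> ('v \<Rightarrow> real) set" where
  "orth_complement G A k \<phi> = {f. supported_on A f \<and> (\<forall>j<k. inner_on G A f (\<phi> j) = 0)}"

lemma is_eigenbasis_iff: "is_eigenbasis G A \<phi> lam \<longleftrightarrow> eigenfamily_on G A (card A) \<phi> lam"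
  unfolding is_eigenbasis_def eigenfamily_on_def orthonormal_on_def supported_on_def inner_on_def
  by auto

lemma orth_complement_add_scaled:
  "f \<in> orth_complement G A k \<phi> \<Longrightarrow> g \<in> orth_complement G A k \<phi> \<Longrightarrow>
    (\<lambda>v. a * f v + b * g v) \<in> orth_complement G A k \<phi>"
  unfolding orth_complement_def supported_on_def by (simp add: inner_on_add_scaled_left)

lemma inner_on_add_scaled_self:
  "inner_on G A (\<lambda>v. f v + e * g v) (\<lambda>v. f v + e * g v)
    = inner_on G A f f + 2 * e * inner_on G A f g + e * e * inner_on G A g g"
  unfolding inner_on_def by (simp add: sum.distrib sum_distrib_left algebra_simps)

lemma eigenfamily_extend:
  assumes fam: "eigenfamily_on G A k \<phi> lam" and f: "f \<in> orth_complement G A k \<phi>"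
    and unit: "inner_on G A f f = 1" and eigen: "\<forall>v\<in>A. lap G f v = \<mu> * f v"
  shows "eigenfamily_on G A (Suc k) (\<phi>(k := f)) (lam(k := \<mu>))"
proof -
  have "inner_on G A ((\<phi>(k := f)) i) ((\<phi>(k := f)) j) = (if i = j then 1 else 0)"
    if ij: "i < Suc k" "j < Suc k" for i j
  proof -
    consider "i = k" "j = k" | "i = k" "j < k" | "i < k" "j = k" | "i < k" "j < k"
      using ij by (metis less_SucE)
    then show ?thesis
      using fam f unit inner_on_commute[of G A "\<phi> i" f]
      unfolding eigenfamily_on_def orthonormal_on_def orth_complement_def
      by cases auto
  qed
  then show ?thesis
    using fam f eigen unfolding eigenfamily_on_def orthonormal_on_def orth_complement_def
    by (auto simp: less_Suc_eq)
qed

lemma nonpos_if_le_all_pos_multiples: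
  fixes x c :: real
  assumes "\<And>e. e > 0 \<Longrightarrow> x \<le> e * c"
  shows "x \<le> 0"
proof (rule ccontr)
  assume "\<not> x \<le> 0"
  define e where "e = x / (1 + \<bar>c\<bar>)"
  have "e > 0" unfolding e_def using \<open>\<not> x \<le> 0\<close> by simp
  have "x \<le> e * \<bar>c\<bar>" using assms[OF \<open>e > 0\<close>] \<open>e > 0\<close> abs_ge_self[of c]
    by (meson mult_left_mono order.trans less_imp_le)
  also have "\<dots> < e * (1 + \<bar>c\<bar>)" using \<open>e > 0\<close> by simp
  also have "\<dots> = x" unfolding e_def by (simp add: add_pos_nonneg)
  finally show False by simp
qed

context finite_region
begin

lemma unit_vector_bound:
  assumes "inner_on G A f f = 1" and "v \<in> A"
  shows "\<bar>f v\<bar> \<le> sqrt (1 / vmeas G v)"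
proof -
  have "vmeas G v * f v * f v \<le> inner_on G A f f"
    unfolding inner_on_def using finite_A assms(2) weighted_square_nonneg
    by (intro member_le_sum) auto
  then have "f v * f v \<le> 1 / vmeas G v"
    using assms vmeas_pos[of v] A_verts by (auto simp: field_simps mult.assoc)
  then show ?thesis using real_sqrt_le_mono by fastforce
qed

lemma continuous_on_rayleigh: "continuous_on UNIV (\<lambda>f :: 'v \<Rightarrow> real. inner_on G A (lap G f) f)"
  using valid unfolding inner_on_def lap_def valid_graph_def incident_def
  by (intro continuous_intros continuous_on_product_coordinates) force+

lemma compact_unit_orth_complement:
  "compact (orth_complement G A k \<phi> \<inter> {f. inner_on G A f f = 1})"
proof -
  define P where "P = Pi\<^sub>E UNIV (\<lambda>v. if v \<in> A then {- sqrt (1 / vmeas G v)..sqrt (1 / vmeas G v)} else {0})"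
  have "compactin (product_topology (\<lambda>v. euclidean) UNIV) P"
    unfolding P_def by (subst compactin_PiE) auto
  then have "compact P" by (simp add: euclidean_product_topology)
  moreover have "closed ({f. inner_on G A f f = 1} \<inter> (\<Inter>j<k. {f. inner_on G A f (\<phi> j) = 0}))"
    unfolding inner_on_def
    by (intro closed_Int closed_INT ballI closed_Collect_eq continuous_intros
        continuous_on_product_coordinates)
  moreover have "orth_complement G A k \<phi> \<inter> {f. inner_on G A f f = 1}
      = P \<inter> ({f. inner_on G A f f = 1} \<inter> (\<Inter>j<k. {f. inner_on G A f (\<phi> j) = 0}))"
    using unit_vector_bound
    unfolding P_def orth_complement_def supported_on_def PiE_iff
    by (fastforce simp: abs_le_iff minus_le_iff split: if_splits)
  ultimately show ?thesis by (simp add: compact_Int_closed)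
qed

lemma rayleigh_le_max:
  assumes f: "f \<in> orth_complement G A k \<phi> \<inter> {f. inner_on G A f f = 1}"
    and max: "\<And>h. h \<in> orth_complement G A k \<phi> \<inter> {f. inner_on G A f f = 1} \<Longrightarrow>
      inner_on G A (lap G h) h \<le> inner_on G A (lap G f) f"
    and h: "h \<in> orth_complement G A k \<phi>"
  shows "inner_on G A (lap G h) h \<le> inner_on G A (lap G f) f * inner_on G A h h"
proof (cases "inner_on G A h h = 0")
  case True
  then have "inner_on G A (lap G h) h = 0"
    unfolding inner_on_def[of _ _ "lap G h"] by (simp add: inner_on_self_eq_0)
  then show ?thesis using True by simp
next
  case False
  define q where "q = inner_on G A h h"
  have "q > 0" using False inner_on_self_nonneg unfolding q_def by (simp add: order_less_le)
  define h' where "h' v = (1 / sqrt q) * h v" for v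
  have "inner_on G A h' h' = 1"
    unfolding h'_def inner_on_scale_self using \<open>q > 0\<close>
    by (simp add: q_def[symmetric] real_sqrt_mult[symmetric])
  moreover have "h' \<in> orth_complement G A k \<phi>"
    unfolding h'_def using orth_complement_add_scaled[OF h h, of "1 / sqrt q" 0] by simp
  ultimately have "inner_on G A (lap G h') h' \<le> inner_on G A (lap G f) f" using max by blast
  moreover have "lap G h' = (\<lambda>v. (1 / sqrt q) * lap G h v)"
    unfolding h'_def using lap_add_scaled[of G "1 / sqrt q" h 0 h] by auto
  then have "inner_on G A (lap G h') h' = (1 / sqrt q) * (1 / sqrt q) * inner_on G A (lap G h) h"
    unfolding h'_def inner_on_def by (simp add: sum_distrib_left mult_ac)
  then have "inner_on G A (lap G h') h' = inner_on G A (lap G h) h / q"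
    using \<open>q > 0\<close> by (simp add: real_sqrt_mult[symmetric])
  ultimately show ?thesis using \<open>q > 0\<close> unfolding q_def by (simp add: divide_le_eq)
qed

end

context locally_finite_region
begin

lemma rayleigh_add_scaled:
  assumes "supported_on A f" and "supported_on A g"
  shows "inner_on G A (lap G (\<lambda>v. f v + e * g v)) (\<lambda>v. f v + e * g v)
    = inner_on G A (lap G f) f + 2 * e * inner_on G A (lap G f) g + e * e * inner_on G A (lap G g) g"
proof -
  have "lap G (\<lambda>v. f v + e * g v) = (\<lambda>v. lap G f v + e * lap G g v)"
    using lap_add_scaled[of G 1 f e g] by auto
  then have "inner_on G A (lap G (\<lambda>v. f v + e * g v)) (\<lambda>v. f v + e * g v)
      = inner_on G A (lap G f) f + e * inner_on G A (lap G f) g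
        + e * inner_on G A (lap G g) f + e * e * inner_on G A (lap G g) g"
    unfolding inner_on_def by (simp add: sum.distrib sum_distrib_left algebra_simps)
  then show ?thesis using inner_lap_commute[OF assms] by simp
qed

lemma lap_restrict_orth_complement:
  assumes "eigenfamily_on G A k \<phi> lam" and "f \<in> orth_complement G A k \<phi>"
  shows "(\<lambda>v. if v \<in> A then lap G f v else 0) \<in> orth_complement G A k \<phi>"
  unfolding orth_complement_def supported_on_def
proof (intro CollectI conjI allI impI)
  fix j assume "j < k"
  have "supported_on A f" "supported_on A (\<phi> j)"
    using assms \<open>j < k\<close> unfolding orth_complement_def eigenfamily_on_def orthonormal_on_def by auto
  have "inner_on G A (\<lambda>v. if v \<in> A then lap G f v else 0) (\<phi> j) = inner_on G A (lap G f) (\<phi> j)"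
    by (rule inner_on_cong) auto
  also have "\<dots> = inner_on G A (lap G (\<phi> j)) f"
    by (rule inner_lap_commute) fact+
  also have "\<dots> = inner_on G A (\<lambda>v. lam j * \<phi> j v) f"
    using assms(1) \<open>j < k\<close> unfolding eigenfamily_on_def by (intro inner_on_cong) auto
  also have "\<dots> = lam j * inner_on G A f (\<phi> j)"
    by (simp add: inner_on_scale_left inner_on_commute)
  finally show "inner_on G A (\<lambda>v. if v \<in> A then lap G f v else 0) (\<phi> j) = 0"
    using assms(2) \<open>j < k\<close> unfolding orth_complement_def by simp
qed simp

lemma rayleigh_maximizer_is_eigenvector:
  assumes fam: "eigenfamily_on G A k \<phi> lam"
    and f: "f \<in> orth_complement G A k \<phi> \<inter> {f. inner_on G A f f = 1}"
    and max: "\<And>h. h \<in> orth_complement G A k \<phi> \<inter> {f. inner_on G A f f = 1} \<Longrightarrow>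
      inner_on G A (lap G h) h \<le> inner_on G A (lap G f) f"
  shows "\<forall>v\<in>A. lap G f v = inner_on G A (lap G f) f * f v"
proof -
  define \<mu> where "\<mu> = inner_on G A (lap G f) f"
  define g where "g v = (if v \<in> A then lap G f v else 0) - \<mu> * f v" for v
  have f_compl: "f \<in> orth_complement G A k \<phi>" and unit: "inner_on G A f f = 1"
    using f by auto
  have g_compl: "g \<in> orth_complement G A k \<phi>"
    using orth_complement_add_scaled[OF lap_restrict_orth_complement[OF fam f_compl] f_compl, of 1 "- \<mu>"]
    unfolding g_def by simp
  have supp: "supported_on A f" "supported_on A g"
    using f_compl g_compl by (auto simp: orth_complement_def)
  have inner_g: "inner_on G A g h = inner_on G A (lap G f) h - \<mu> * inner_on G A f h" for h
  proof -
    have "inner_on G A g h = inner_on G A (\<lambda>v. 1 * lap G f v + (- \<mu>) * f v) h"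
      by (rule inner_on_cong) (simp_all add: g_def)
    then show ?thesis using inner_on_add_scaled_left[of G A 1 "lap G f" "- \<mu>" f h] by simp
  qed
  have "inner_on G A f g = 0"
    using inner_g[of f] unit by (simp add: inner_on_commute[of G A f g] \<mu>_def)
  then have "inner_on G A (lap G f) g = inner_on G A g g"
    using inner_g[of g] by simp
  \<comment> \<open>First variation: perturbing \<open>f\<close> in the direction \<open>g\<close> cannot increase the Rayleigh quotient.\<close>
  have "2 * inner_on G A g g \<le> e * (\<mu> * inner_on G A g g - inner_on G A (lap G g) g)" if "e > 0" for e
  proof -
    have "(\<lambda>v. f v + e * g v) \<in> orth_complement G A k \<phi>"
      using orth_complement_add_scaled[OF f_compl g_compl, of 1 e] by simp
    from rayleigh_le_max[OF f max this]
    have "\<mu> + 2 * e * inner_on G A g g + e * e * inner_on G A (lap G g) g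
        \<le> \<mu> * (1 + e * e * inner_on G A g g)"
      unfolding rayleigh_add_scaled[OF supp] inner_on_add_scaled_self
      using unit \<open>inner_on G A f g = 0\<close> \<open>inner_on G A (lap G f) g = inner_on G A g g\<close>
      by (simp add: \<mu>_def)
    then have "e * (2 * inner_on G A g g) \<le> e * (e * (\<mu> * inner_on G A g g - inner_on G A (lap G g) g))"
      by (simp add: algebra_simps)
    then show ?thesis using \<open>e > 0\<close> by simp
  qed
  then have "2 * inner_on G A g g \<le> 0" by (rule nonpos_if_le_all_pos_multiples)
  then have "inner_on G A g g = 0" using inner_on_self_nonneg[of g] by simp
  then show ?thesis
    using inner_on_self_eq_0[of g] unfolding \<mu>_def[symmetric] by (simp add: g_def)
qed

lemma exists_eigenvector_orth_complement:
  assumes fam: "eigenfamily_on G A k \<phi> lam"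
    and nonempty: "orth_complement G A k \<phi> \<inter> {f. inner_on G A f f = 1} \<noteq> {}"
  obtains f \<mu> where "f \<in> orth_complement G A k \<phi>" "inner_on G A f f = 1" "\<forall>v\<in>A. lap G f v = \<mu> * f v"
proof -
  obtain f where f: "f \<in> orth_complement G A k \<phi> \<inter> {f. inner_on G A f f = 1}"
    and max: "\<And>h. h \<in> orth_complement G A k \<phi> \<inter> {f. inner_on G A f f = 1} \<Longrightarrow>
      inner_on G A (lap G h) h \<le> inner_on G A (lap G f) f"
    using continuous_attains_sup[OF compact_unit_orth_complement nonempty
        continuous_on_subset[OF continuous_on_rayleigh subset_UNIV]]
    by blast
  show ?thesis
    using that f rayleigh_maximizer_is_eigenvector[OF fam f max] by blast
qed

lemma exists_eigenfamily: "m \<le> card A \<Longrightarrow> \<exists>\<phi> lam. eigenfamily_on G A m \<phi> lam"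
proof (induction m)
  case 0
  show ?case by (simp add: eigenfamily_on_def orthonormal_on_def)
next
  case (Suc m)
  then obtain \<phi> lam where fam: "eigenfamily_on G A m \<phi> lam" by auto
  then have "orthonormal_on G A m \<phi>" by (simp add: eigenfamily_on_def)
  moreover have "\<not> complete_on G A m \<phi>"
    using complete_on_card[OF \<open>orthonormal_on G A m \<phi>\<close>] Suc.prems by auto
  ultimately obtain f0 where "f0 \<in> orth_complement G A m \<phi> \<inter> {f. inner_on G A f f = 1}"
    by (rule exists_unit_orthogonal_if_incomplete) (auto simp: orth_complement_def)
  then obtain f \<mu> where "f \<in> orth_complement G A m \<phi>" "inner_on G A f f = 1"
      "\<forall>v\<in>A. lap G f v = \<mu> * f v"
    using exists_eigenvector_orth_complement[OF fam] by blast
  then show ?case using eigenfamily_extend[OF fam] by blast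
qed

lemma exists_eigenbasis: "\<exists>\<phi> lam. is_eigenbasis G A \<phi> lam"
  using exists_eigenfamily[of "card A"] by (simp add: is_eigenbasis_iff)

end

section \<open>The Dirichlet heat kernel of a finite set\<close>

definition eigvecs :: "('v, 'e) wgraph \<Rightarrow> 'v set \<Rightarrow> nat \<Rightarrow> 'v \<Rightarrow> real" where
  "eigvecs G A = fst (SOME (\<phi>, lam). is_eigenbasis G A \<phi> lam)"

definition eigvals :: "('v, 'e) wgraph \<Rightarrow> 'v set \<Rightarrow> nat \<Rightarrow> real" where
  "eigvals G A = snd (SOME (\<phi>, lam). is_eigenbasis G A \<phi> lam)"

lemma heat_kernel_eq:
  "heat_kernel G A x y t =
    (\<Sum>i<card A. exp (- t * eigvals G A i) * lift G (eigvecs G A i) x * lift G (eigvecs G A i) y)"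
  unfolding heat_kernel_def eigvecs_def eigvals_def Let_def by (simp add: case_prod_beta)

lemma heat_kernel_Vx:
  "heat_kernel G A (Vx v) (Vx w) t =
    (\<Sum>i<card A. exp (- t * eigvals G A i) * eigvecs G A i v * eigvecs G A i w)"
  by (simp add: heat_kernel_eq)

lemma heat_kernel_lift:
  "heat_kernel G A x y t = lift G (\<lambda>v. lift G (\<lambda>w. heat_kernel G A (Vx v) (Vx w) t) y) x"
proof -
  have "lift G (\<lambda>w. heat_kernel G A (Vx v) (Vx w) t) y
      = (\<Sum>i<card A. (exp (- t * eigvals G A i) * lift G (eigvecs G A i) y) * eigvecs G A i v)" for v
    using lift_sum_scaled[where I = "{..<card A}" and f = "eigvecs G A" and p = y
        and c = "\<lambda>i. exp (- t * eigvals G A i) * eigvecs G A i v"]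
    by (simp add: heat_kernel_Vx mult_ac)
  then have "lift G (\<lambda>v. lift G (\<lambda>w. heat_kernel G A (Vx v) (Vx w) t) y) x
      = lift G (\<lambda>v. \<Sum>i<card A. (exp (- t * eigvals G A i) * lift G (eigvecs G A i) y) * eigvecs G A i v) x"
    by simp
  also have "\<dots> = (\<Sum>i<card A. (exp (- t * eigvals G A i) * lift G (eigvecs G A i) y) * lift G (eigvecs G A i) x)"
    by (rule lift_sum_scaled)
  finally show ?thesis by (simp add: heat_kernel_eq mult_ac)
qed

lemma continuous_on_heat_kernel_Vx: "continuous_on {0..} (heat_kernel G A (Vx v) (Vx w))"
  unfolding heat_kernel_Vx[abs_def] by (intro continuous_intros)

lemma fundamental_solution_lift:
  assumes "fundamental_solution G K" and "valid_graph G"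
    and "x \<in> pts G" and "y \<in> pts G" and "t \<ge> 0"
  shows "K x y t = lift G (\<lambda>v. lift G (\<lambda>w. K (Vx v) (Vx w) t) y) x"
proof -
  have "edgewise_linear G (\<lambda>x. K x y t)" "\<forall>v\<in>verts G. edgewise_linear G (\<lambda>y. K (Vx v) y t)"
    using assms unfolding fundamental_solution_def by (auto simp: pts_def)
  then show ?thesis
    using assms(3,4) unfolding edgewise_linear_def by (auto intro: lift_cong[OF assms(2)])
qed

context locally_finite_region
begin

lemma eigenfamily_eigvecs: "eigenfamily_on G A (card A) (eigvecs G A) (eigvals G A)"
proof -
  have "case (SOME (\<phi>, lam). is_eigenbasis G A \<phi> lam) of (\<phi>, lam) \<Rightarrow> is_eigenbasis G A \<phi> lam"
    using exists_eigenbasis by (intro someI_ex[where P = "case_prod (is_eigenbasis G A)"]) auto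
  then show ?thesis
    unfolding eigvecs_def eigvals_def is_eigenbasis_iff[symmetric] by (simp add: case_prod_beta)
qed

lemma complete_on_eigvecs: "complete_on G A (card A) (eigvecs G A)"
  using eigenfamily_eigvecs orthonormal_card_complete by (simp add: eigenfamily_on_def)

lemma heat_kernel_Vx_outside: "v \<notin> A \<or> w \<notin> A \<Longrightarrow> heat_kernel G A (Vx v) (Vx w) t = 0"
  using eigenfamily_eigvecs
  unfolding heat_kernel_Vx eigenfamily_on_def orthonormal_on_def supported_on_def by auto

lemma heat_kernel_Vx_initial:
  assumes "v \<in> A"
  shows "heat_kernel G A (Vx v) (Vx w) 0 = (if v = w then 1 / vmeas G w else 0)"
proof (cases "w \<in> A")
  case True
  have "vmeas G v * (\<Sum>i<card A. eigvecs G A i v * eigvecs G A i w) = (if v = w then 1 else 0)"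
    using complete_on_eigvecs assms True unfolding complete_on_def by auto
  moreover have "vmeas G v > 0" using assms A_verts vmeas_pos by auto
  ultimately show ?thesis
    unfolding heat_kernel_Vx by (auto simp: field_simps mult.assoc split: if_splits)
next
  case False
  then show ?thesis using assms heat_kernel_Vx_outside by auto
qed

lemma heat_kernel_Vx_has_derivative:
  assumes "v \<in> A"
  shows "(heat_kernel G A (Vx v) (Vx w) has_real_derivative
      - lap G (\<lambda>u. heat_kernel G A (Vx u) (Vx w) t) v) (at t)"
proof -
  let ?\<phi> = "eigvecs G A" and ?ev = "eigvals G A"
  have eigen: "lap G (?\<phi> i) v = ?ev i * ?\<phi> i v" if "i < card A" for i
    using eigenfamily_eigvecs assms that unfolding eigenfamily_on_def by auto
  have "lap G (\<lambda>u. heat_kernel G A (Vx u) (Vx w) t) v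
      = lap G (\<lambda>u. \<Sum>i<card A. (exp (- t * ?ev i) * ?\<phi> i w) * ?\<phi> i u) v"
    unfolding heat_kernel_Vx by (simp add: mult_ac)
  also have "\<dots> = (\<Sum>i<card A. exp (- t * ?ev i) * (- ?ev i) * ?\<phi> i v * ?\<phi> i w) * -1"
    unfolding lap_sum_scaled sum_distrib_right by (intro sum.cong) (auto simp: eigen)
  finally have "- lap G (\<lambda>u. heat_kernel G A (Vx u) (Vx w) t) v
      = (\<Sum>i<card A. exp (- t * ?ev i) * (- ?ev i) * ?\<phi> i v * ?\<phi> i w)"
    by simp
  moreover have "((\<lambda>s. \<Sum>i<card A. exp (- s * ?ev i) * ?\<phi> i v * ?\<phi> i w) has_real_derivative
      (\<Sum>i<card A. exp (- t * ?ev i) * (- ?ev i) * ?\<phi> i v * ?\<phi> i w)) (at t)"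
    by (intro DERIV_sum) (auto intro!: derivative_eq_intros)
  ultimately show ?thesis
    unfolding heat_kernel_Vx[abs_def] by simp
qed

lemma heat_kernel_Vx_nonneg:
  assumes "t \<ge> 0"
  shows "heat_kernel G A (Vx v) (Vx w) t \<ge> 0"
proof (cases "v \<in> A")
  case True
  show ?thesis
  proof (rule heat_minimum_principle[where z = "\<lambda>u. heat_kernel G A (Vx u) (Vx w)", OF _ _ _ _ True assms])
    show "0 \<le> heat_kernel G A (Vx u) (Vx w) 0" if "u \<in> A" for u
      using heat_kernel_Vx_initial[OF that] vmeas_pos[of u] that A_verts by auto
  qed (auto simp: continuous_on_heat_kernel_Vx heat_kernel_Vx_has_derivative heat_kernel_Vx_outside)
qed (simp add: heat_kernel_Vx_outside)

lemma heat_kernel_Vx_le_solution: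
  assumes cont: "\<And>u. u \<in> A \<Longrightarrow> continuous_on {0..} (z u)"
    and deriv: "\<And>u s. u \<in> A \<Longrightarrow> s > 0 \<Longrightarrow> (z u has_real_derivative - lap G (\<lambda>v. z v s) u) (at s)"
    and init: "\<And>u. u \<in> A \<Longrightarrow> z u 0 \<ge> (if u = w then 1 / vmeas G w else 0)"
    and outside: "\<And>u s. u \<in> verts G \<Longrightarrow> u \<notin> A \<Longrightarrow> s \<ge> 0 \<Longrightarrow> z u s \<ge> 0"
    and "v \<in> A" and "t \<ge> 0"
  shows "heat_kernel G A (Vx v) (Vx w) t \<le> z v t"
proof -
  have "0 \<le> z v t - heat_kernel G A (Vx v) (Vx w) t"
  proof (rule heat_minimum_principle[where z = "\<lambda>u s. z u s - heat_kernel G A (Vx u) (Vx w) s"])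
    show "continuous_on {0..} (\<lambda>s. z u s - heat_kernel G A (Vx u) (Vx w) s)" if "u \<in> A" for u
      using cont[OF that] continuous_on_heat_kernel_Vx by (intro continuous_intros)
    show "((\<lambda>s. z u s - heat_kernel G A (Vx u) (Vx w) s) has_real_derivative
        - lap G (\<lambda>v. z v s - heat_kernel G A (Vx v) (Vx w) s) u) (at s)"
      if "u \<in> A" "s > 0" for u s
      using DERIV_diff[OF deriv[OF that] heat_kernel_Vx_has_derivative[OF that(1)]]
      by (simp add: lap_diff)
  qed (use init outside heat_kernel_Vx_initial heat_kernel_Vx_outside assms in auto)
  then show ?thesis by simp
qed

lemma heat_kernel_Vx_le_inverse_vmeas:
  assumes "w \<in> verts G" and "t \<ge> 0"
  shows "heat_kernel G A (Vx v) (Vx w) t \<le> 1 / vmeas G w"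
proof (cases "v \<in> A")
  case True
  show ?thesis
    by (rule heat_kernel_Vx_le_solution[where z = "\<lambda>_ _. 1 / vmeas G w", OF _ _ _ _ True \<open>t \<ge> 0\<close>])
      (use vmeas_pos[OF assms(1)] in \<open>auto simp: lap_const intro: DERIV_const\<close>)
next
  case False
  then show ?thesis using heat_kernel_Vx_outside vmeas_pos[OF assms(1)] by simp
qed

lemma heat_kernel_Vx_mono:
  assumes "B \<subseteq> A" and "t \<ge> 0"
  shows "heat_kernel G B (Vx v) (Vx w) t \<le> heat_kernel G A (Vx v) (Vx w) t"
proof -
  interpret B: locally_finite_region G B
    using locally_finite_region_subset[OF _ assms(1)] locally_finite_region_axioms .
  show ?thesis
  proof (cases "v \<in> B")
    case True
    show ?thesis
      by (rule B.heat_kernel_Vx_le_solution[OF _ _ _ _ True \<open>t \<ge> 0\<close>])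
        (use assms in \<open>auto simp: continuous_on_heat_kernel_Vx heat_kernel_Vx_has_derivative
          heat_kernel_Vx_initial heat_kernel_Vx_nonneg\<close>)
  next
    case False
    then show ?thesis using B.heat_kernel_Vx_outside heat_kernel_Vx_nonneg[OF \<open>t \<ge> 0\<close>] by simp
  qed
qed

lemma heat_kernel_Vx_le_fundamental:
  assumes A_interior: "A \<subseteq> interior G"
    and fund: "fundamental_solution G K" and K_nonneg: "\<forall>x\<in>pts G. \<forall>y\<in>pts G. \<forall>t\<ge>0. K x y t \<ge> 0"
    and v: "v \<in> verts G" and w: "w \<in> verts G" and "t \<ge> 0"
  shows "heat_kernel G A (Vx v) (Vx w) t \<le> K (Vx v) (Vx w) t"
proof (cases "v \<in> A \<and> w \<in> A")
  case True
  then have "w \<in> interior G" using A_interior by auto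
  then have ivp: "dirichlet_ivp G (\<lambda>x t. K x (Vx w) t) (delta G w)"
    using fund unfolding fundamental_solution_def by auto
  have Vx_pts: "Vx u \<in> pts G" if "u \<in> verts G" for u
    using that by (simp add: pts_def)
  show ?thesis
  proof (rule heat_kernel_Vx_le_solution[where z = "\<lambda>u. K (Vx u) (Vx w)"])
    show "continuous_on {0..} (K (Vx u) (Vx w))" if "u \<in> A" for u
      using ivp that A_verts
      unfolding dirichlet_ivp_def heat_solution_def graph_continuous_def by auto
    show "(K (Vx u) (Vx w) has_real_derivative - lap G (\<lambda>v. K (Vx v) (Vx w) s) u) (at s)"
      if "u \<in> A" "s > 0" for u s
      using ivp that A_interior unfolding dirichlet_ivp_def heat_solution_def by auto
    show "(if u = w then 1 / vmeas G w else 0) \<le> K (Vx u) (Vx w) 0" if "u \<in> A" for u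
      using ivp that A_interior unfolding dirichlet_ivp_def delta_def by auto
  qed (use True K_nonneg Vx_pts w \<open>t \<ge> 0\<close> in auto)
next
  case False
  then show ?thesis
    using heat_kernel_Vx_outside K_nonneg v w \<open>t \<ge> 0\<close> by (auto simp: pts_def)
qed

lemma heat_kernel_mono:
  assumes "B \<subseteq> A" and "x \<in> pts G" and "y \<in> pts G" and "t \<ge> 0"
  shows "heat_kernel G B x y t \<le> heat_kernel G A x y t"
  unfolding heat_kernel_lift[of G B x y t] heat_kernel_lift[of G A x y t]
  using assms by (intro lift_mono[OF valid] heat_kernel_Vx_mono)

lemma heat_kernel_le_inverse_vmeas:
  assumes "x \<in> pts G" and "y \<in> pts G" and "t \<ge> 0"
  shows "heat_kernel G A x y t \<le> lift G (\<lambda>w. 1 / vmeas G w) y"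
proof -
  have "heat_kernel G A x y t \<le> lift G (\<lambda>v. lift G (\<lambda>w. 1 / vmeas G w) y) x"
    unfolding heat_kernel_lift[of G A x y t]
    using assms by (intro lift_mono[OF valid] heat_kernel_Vx_le_inverse_vmeas)
  then show ?thesis by (simp add: lift_const)
qed

lemma heat_kernel_le_fundamental:
  assumes "A \<subseteq> interior G" and "fundamental_solution G K"
    and "\<forall>x\<in>pts G. \<forall>y\<in>pts G. \<forall>t\<ge>0. K x y t \<ge> 0"
    and "x \<in> pts G" and "y \<in> pts G" and "t \<ge> 0"
  shows "heat_kernel G A x y t \<le> K x y t"
  unfolding heat_kernel_lift[of G A x y t] fundamental_solution_lift[OF assms(2) valid assms(4-6)]
  using assms by (intro lift_mono[OF valid] heat_kernel_Vx_le_fundamental)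

end

section \<open>Limits along exhaustions\<close>

lemma exhaustion_interior: "exhaustion G B \<Longrightarrow> B i \<subseteq> interior G"
  by (simp add: exhaustion_def)

lemma exhaustion_mono: "exhaustion G B \<Longrightarrow> mono B"
  unfolding exhaustion_def by (simp add: mono_iff_le_Suc)

lemma exhaustion_cofinal:
  assumes "exhaustion G B" and "finite F" and "F \<subseteq> interior G"
  shows "\<exists>j. F \<subseteq> B j"
  using assms(2,3)
proof (induction F rule: finite_induct)
  case (insert a F)
  then obtain j where "F \<subseteq> B j" by auto
  moreover have "a \<in> (\<Union>i. B i)"
    using insert.prems assms(1) unfolding exhaustion_def by auto
  then obtain j' where "a \<in> B j'" by blast
  ultimately have "insert a F \<subseteq> B (max j j')"
    using monoD[OF exhaustion_mono[OF assms(1)], of j "max j j'"]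
      monoD[OF exhaustion_mono[OF assms(1)], of j' "max j j'"] by auto
  then show ?case by blast
qed simp

context
  fixes G :: "('v, 'e) wgraph"
  assumes valid: "valid_graph G" and locally_finite: "locally_finite G"
begin

lemma exhaustion_region: "exhaustion G B \<Longrightarrow> locally_finite_region G (B i)"
  using valid locally_finite
  unfolding exhaustion_def locally_finite_region_def locally_finite_region_axioms_def
    finite_region_def interior_def
  by auto

lemma heat_kernel_exhaustion_mono_bounded:
  assumes "exhaustion G B" and "x \<in> pts G" and "y \<in> pts G" and "t \<ge> 0"
  shows "mono (\<lambda>i. heat_kernel G (B i) x y t)"
    and "bdd_above (range (\<lambda>i. heat_kernel G (B i) x y t))"
proof -
  show "mono (\<lambda>i. heat_kernel G (B i) x y t)"
  proof (rule monoI)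
    fix i j :: nat
    assume "i \<le> j"
    then have "B i \<subseteq> B j" by (rule monoD[OF exhaustion_mono[OF assms(1)]])
    then show "heat_kernel G (B i) x y t \<le> heat_kernel G (B j) x y t"
      by (rule locally_finite_region.heat_kernel_mono[OF exhaustion_region[OF assms(1)] _ assms(2-4)])
  qed
  show "bdd_above (range (\<lambda>i. heat_kernel G (B i) x y t))"
    by (rule bdd_aboveI2[where M = "lift G (\<lambda>w. 1 / vmeas G w) y"])
      (rule locally_finite_region.heat_kernel_le_inverse_vmeas[OF exhaustion_region[OF assms(1)] assms(2-4)])
qed

lemma heat_kernel_exhaustion_tendsto_SUP:
  assumes "exhaustion G B" and "x \<in> pts G" and "y \<in> pts G" and "t \<ge> 0"
  shows "(\<lambda>i. heat_kernel G (B i) x y t) \<longlonglongrightarrow> (SUP i. heat_kernel G (B i) x y t)"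
  by (rule LIMSEQ_incseq_SUP[OF heat_kernel_exhaustion_mono_bounded(2,1)[OF assms]])

lemma heat_kernel_exhaustion_SUP_le:
  assumes A: "exhaustion G A" and B: "exhaustion G B"
    and "x \<in> pts G" and "y \<in> pts G" and "t \<ge> 0"
  shows "(SUP i. heat_kernel G (A i) x y t) \<le> (SUP i. heat_kernel G (B i) x y t)"
proof (rule cSUP_least)
  fix i
  have "finite (A i)" using A by (simp add: exhaustion_def)
  then obtain j where "A i \<subseteq> B j"
    using exhaustion_cofinal[OF B _ exhaustion_interior[OF A]] by blast
  then have "heat_kernel G (A i) x y t \<le> heat_kernel G (B j) x y t"
    by (rule locally_finite_region.heat_kernel_mono[OF exhaustion_region[OF B] _ assms(3-5)])
  also have "\<dots> \<le> (SUP i. heat_kernel G (B i) x y t)"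
    using heat_kernel_exhaustion_mono_bounded(2)[OF B assms(3-5)] by (rule cSUP_upper[rotated]) simp
  finally show "heat_kernel G (A i) x y t \<le> (SUP i. heat_kernel G (B i) x y t)" .
qed simp

end

theorem mainTheorem15:
  fixes G :: "('v, 'e) wgraph" and A :: "nat \<Rightarrow> 'v set"
  assumes "valid_graph G" and "locally_finite G" and "exhaustion G A"
  shows "\<exists>K. (\<forall>x\<in>pts G. \<forall>y\<in>pts G. \<forall>t\<ge>0.
                 mono (\<lambda>i. heat_kernel G (A i) x y t) \<and>
                 (\<lambda>i. heat_kernel G (A i) x y t) \<longlonglongrightarrow> K x y t) \<and>
             (\<forall>B. exhaustion G B \<longrightarrow> (\<forall>x\<in>pts G. \<forall>y\<in>pts G. \<forall>t\<ge>0.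
                 mono (\<lambda>i. heat_kernel G (B i) x y t) \<and>
                 (\<lambda>i. heat_kernel G (B i) x y t) \<longlonglongrightarrow> K x y t)) \<and>
             (\<forall>Gf. fundamental_solution G Gf \<and>
                   (\<forall>x\<in>pts G. \<forall>y\<in>pts G. \<forall>t\<ge>0. Gf x y t \<ge> 0) \<longrightarrow>
                   (\<forall>x\<in>pts G. \<forall>y\<in>pts G. \<forall>t\<ge>0. K x y t \<le> Gf x y t))"
proof -
  note graph = assms(1,2)
  define K where "K x y t = (SUP i. heat_kernel G (A i) x y t)" for x y t
  have limit: "mono (\<lambda>i. heat_kernel G (B i) x y t) \<and> (\<lambda>i. heat_kernel G (B i) x y t) \<longlonglongrightarrow> K x y t"
    if "exhaustion G B" "x \<in> pts G" "y \<in> pts G" "t \<ge> 0" for B x y t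
  proof -
    have "K x y t = (SUP i. heat_kernel G (B i) x y t)"
      unfolding K_def using heat_kernel_exhaustion_SUP_le[OF graph] assms(3) that
      by (intro antisym) auto
    then show ?thesis
      using heat_kernel_exhaustion_mono_bounded(1)[OF graph that]
        heat_kernel_exhaustion_tendsto_SUP[OF graph that] by simp
  qed
  have below: "K x y t \<le> Gf x y t"
    if "fundamental_solution G Gf" "\<forall>x\<in>pts G. \<forall>y\<in>pts G. \<forall>t\<ge>0. Gf x y t \<ge> 0"
      "x \<in> pts G" "y \<in> pts G" "t \<ge> 0" for Gf x y t
    unfolding K_def
    using locally_finite_region.heat_kernel_le_fundamental[OF exhaustion_region[OF graph assms(3)]
        exhaustion_interior[OF assms(3)] that]
    by (intro cSUP_least) auto
  show ?thesis using limit[OF assms(3)] limit below by blast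
qed

end
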